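(* Let $d, n \in \mathbb{N}$, let $\Gamma_{\mathrm{noise}} \in \mathbb{R}^{n\times n}$ be symmetric positive definite, let ${\boldsymbol{y}} \in \mathbb{R}^n$, and let $F, \hat F : \mathbb{R}^d \to \mathbb{R}^n$ be differentiable maps (the "high-fidelity" forward map and its surrogate). Let $r\le d$ and $\Phi \in \mathbb{R}^{d\times r}$ with $\Phi^T\Phi = I_r$, and set $P_r = \Phi\Phi^T$. Define $$L({\boldsymbol{\eta}}) = \tfrac12 \|{\boldsymbol{y}} - F({\boldsymbol{\eta}})\|^2_{\Gamma_{\mathrm{noise}}^{-1}} + \tfrac12\|{\boldsymbol{\eta}}\|^2,\qquad \hat L({\boldsymbol{\eta}}) = \tfrac12 \|{\boldsymbol{y}} - \hat F({\boldsymbol{\eta}})\|^2_{\Gamma_{\mathrm{noise}}^{-1}} + \tfrac12\|\Phi^T{\boldsymbol{\eta}}\|^2,$$ where $\|{\boldsymbol{v}}\|^2_{A} = {\boldsymbol{v}}^TA{\boldsymbol{v}}$. Let ${\boldsymbol{\eta}}^*, \hat{\boldsymbol{\eta}}^* \in \mathbb{R}^d$ be stationary points, $\nabla L({\boldsymbol{\eta}}^* ) = 0$ and $\nabla \hat L(\hat{\boldsymbol{\eta}}^* ) = 0$, i.e. $$ -\nabla F({\boldsymbol{\eta}}^* )^T\Gamma_{\mathrm{noise}}^{-1}({\boldsymbol{y}}-F({\boldsymbol{\eta}}^* )) + {\boldsymbol{\eta}}^* = 0,\qquad -\nabla \hat F(\hat{\boldsymbol{\eta}}^* )^T\Gamma_{\mathrm{noise}}^{-1}({\boldsymbol{y}}-\hat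 F(\hat{\boldsymbol{\eta}}^* )) + P_r\hat{\boldsymbol{\eta}}^* = 0,$$ and assume $\hat{\boldsymbol{\eta}}^*$ lies in the range of $\Phi$, i.e. $P_r\hat{\boldsymbol{\eta}}^* = \hat{\boldsymbol{\eta}}^*$. Suppose there is a radius $R>0$ such that: (A1) $L$ and $\hat L$ are twice differentiable at ${\boldsymbol{\eta}}^*$ and $\hat{\boldsymbol{\eta}}^*$ respectively, and there exist matrix-valued functions $\delta, \hat\delta$ with values in $\mathbb{R}^{d\times d}$, $\lim_{{\boldsymbol{\eta}}\to{\boldsymbol{\eta}}^*}\|\delta({\boldsymbol{\eta}})\| = 0$, $\lim_{{\boldsymbol{\eta}}\to\hat{\boldsymbol{\eta}}^*}\|\hat\delta({\boldsymbol{\eta}})\|=0$, such that $\nabla L({\boldsymbol{\eta}}) = \nabla L({\boldsymbol{\eta}}^* ) + \nabla^2 L({\boldsymbol{\eta}}^* )({\boldsymbol{\eta}}-{\boldsymbol{\eta}}^* ) + \delta({\boldsymbol{\eta}})({\boldsymbol{\eta}}-{\boldsymbol{\eta}}^* )$ whenever $\|{\boldsymbol{\eta}}-{\boldsymbol{\eta}}^*\|\le R$, and $\nabla \hat L({\boldsymbol{\eta}}) = \nabla \hat L(\hat{\boldsymbol{\eta}}^* ) + \nabla^2 \hat L(\hat{\boldsymbol{\eta}}^* )({\boldsymbol{\eta}}-\hat{\boldsymbol{\eta}}^* ) + \hat\delta({\boldsymbol{\eta}})({\boldsymbol{\eta}}-\hat{\boldsymbol{\eta}}^* )$ whenever $\|{\boldsymbol{\eta}}-\hat{\boldsymbol{\eta}}^*\|\le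 R$; moreover, for some constant $c_h>0$, $$\big\|(\nabla^2\hat L(\hat{\boldsymbol{\eta}}^* ) + \nabla^2 L({\boldsymbol{\eta}}^* ))({\boldsymbol{\eta}}^*-\hat{\boldsymbol{\eta}}^* ) + (\hat\delta({\boldsymbol{\eta}}^* )+\delta(\hat{\boldsymbol{\eta}}^* ))({\boldsymbol{\eta}}^*-\hat{\boldsymbol{\eta}}^* )\big\| \ge c_h\|{\boldsymbol{\eta}}^*-\hat{\boldsymbol{\eta}}^*\|.$$ (A2) There are constants $\varepsilon_1,\varepsilon_2>0$ with $\|F({\boldsymbol{\eta}}) - \hat F({\boldsymbol{\eta}})\| \le \varepsilon_1$ and $\|\nabla F({\boldsymbol{\eta}}) - \nabla\hat F({\boldsymbol{\eta}})\|\le\varepsilon_2$ for all ${\boldsymbol{\eta}}$ with $\|{\boldsymbol{\eta}}-{\boldsymbol{\eta}}^*\|\le R$ or $\|{\boldsymbol{\eta}}-\hat{\boldsymbol{\eta}}^*\|\le R$ (in particular at ${\boldsymbol{\eta}}^*$ and $\hat{\boldsymbol{\eta}}^*$). (A3) There is a constant $\varepsilon_3>0$ with $\|(I-P_r){\boldsymbol{\eta}}^*\|\le\varepsilon_3$. If $\|{\boldsymbol{\eta}}^*-\hat{\boldsymbol{\eta}}^*\|\le R$, then $$\|{\boldsymbol{\eta}}^*-\hat{\boldsymbol{\eta}}^*\| \le c_1\varepsilon_1 + c_2\varepsilon_2 + c_3\varepsilon_3 =: \varepsilon_{\boldsymbol{m}},$$ with $c_1 = \|\Gamma_{\mathrm{noise}}^{-1}\|\big(\|\nabla\hat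 F({\boldsymbol{\eta}}^* )\| + \|\nabla F(\hat{\boldsymbol{\eta}}^* )\|\big)/c_h$, $c_2 = \|\Gamma_{\mathrm{noise}}^{-1}\|\big(2\|{\boldsymbol{y}}\| + \|F({\boldsymbol{\eta}}^* )\| + \|\hat F(\hat{\boldsymbol{\eta}}^* )\|\big)/c_h$, $c_3 = 1/c_h$, which are independent of $\varepsilon_1,\varepsilon_2,\varepsilon_3$.
   Context: Norms: $\|\cdot\|$ denotes the Euclidean norm for vectors and the Frobenius norm for matrices. $\nabla F({\boldsymbol{\eta}})\in\mathbb{R}^{n\times d}$ denotes the Jacobian. Interpretation (not needed for the statement): ${\boldsymbol{\eta}}$ is the whitened parameter, ${\boldsymbol{m}} = {\boldsymbol{m}}_{\mathrm{prior}} + \Gamma_{\mathrm{prior}}^{1/2}{\boldsymbol{\eta}}$, $L$ is the negative log-posterior whose minimizer is the MAP point, and $\hat L$ is its surrogate counterpart using a neural network $\hat F$ that depends on ${\boldsymbol{\eta}}$ only through $\Phi^T{\boldsymbol{\eta}}$; the bound equals $\|{\boldsymbol{m}}^*-\hat{\boldsymbol{m}}^*\|_{\Gamma_{\mathrm{prior}}^{-1}}$. *)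

theory Defs
  imports "HOL-Analysis.Analysis"
begin

definition jacobian :: "(real^'d \<Rightarrow> real^'n) \<Rightarrow> real^'d \<Rightarrow> real^'d^'n" where
  "jacobian f x = matrix (frechet_derivative f (at x))"

definition grad :: "(real^'d \<Rightarrow> real) \<Rightarrow> real^'d \<Rightarrow> real^'d" where
  "grad f x = (\<chi> i. frechet_derivative f (at x) (axis i 1))"

definition hess :: "(real^'d \<Rightarrow> real) \<Rightarrow> real^'d \<Rightarrow> real^'d^'d" where
  "hess f x = jacobian (grad f) x"

definition wnorm2 :: "real^'n^'n \<Rightarrow> real^'n \<Rightarrow> real" where
  "wnorm2 A v = v \<bullet> (A *v v)"

end

theory Submission
  imports Defs
begin

text \<open>
  Subtracting the linearisations of the two gradients at the two stationary points, the cross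
  difference \<open>grad Lh es - grad L eh\<close> is the operator of (A1) applied to \<open>es - eh\<close>, so its
  norm dominates \<open>ch * norm (es - eh)\<close>. By stationarity the same vector is the sum of the
  gradient mismatches \<open>grad Lh - grad L\<close> at \<open>es\<close> and at \<open>eh\<close>. Each mismatch splits into a
  data-misfit part, bounded through (A2) by the distance of the forward maps and of their
  Jacobians, and a regularisation part \<open>(I - \<Phi> \<Phi>\<^sup>T) x\<close>, bounded by (A3) at \<open>es\<close> and zero at
  \<open>eh\<close> because \<open>eh\<close> lies in the range of \<open>\<Phi>\<close>.
\<close>

lemma invertible_if_positive_definite:
  fixes G :: "real^'n^'n"
  assumes "\<forall>v. v \<noteq> 0 \<longrightarrow> v \<bullet> (G *v v) > 0"
  shows "invertible G"
proof -
  have "\<forall>v. G *v v = 0 \<longrightarrow> v = 0"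
    using assms by (metis inner_zero_right less_irrefl)
  then show ?thesis
    unfolding invertible_left_inverse matrix_left_invertible_ker .
qed

lemma matrix_inv_inverse:
  assumes "invertible (G::real^'n^'n)"
  shows "G ** matrix_inv G = mat 1" "matrix_inv G ** G = mat 1"
  using someI_ex[OF assms[unfolded invertible_def]] by (simp_all add: matrix_inv_def)

lemma transpose_matrix_inv_symmetric:
  fixes G :: "real^'n^'n"
  assumes sym: "transpose G = G" and inv: "invertible G"
  shows "transpose (matrix_inv G) = matrix_inv G"
proof -
  have "G ** transpose (matrix_inv G) = mat 1"
    using arg_cong[OF matrix_inv_inverse(2)[OF inv], of transpose]
    by (simp add: matrix_transpose_mul sym)
  then have "matrix_inv G ** (G ** transpose (matrix_inv G)) = matrix_inv G"
    by simp
  then show ?thesis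
    by (simp add: matrix_mul_assoc matrix_inv_inverse(2)[OF inv])
qed

text \<open>The norm of \<open>real^'n^'m\<close> is the Frobenius norm, which bounds the operator norm.\<close>

lemma norm_matrix_vector_mult_le: "norm ((A::real^'n^'m) *v x) \<le> norm A * norm x"
proof -
  have "(norm (A *v x))\<^sup>2 = (\<Sum>i\<in>UNIV. (A$i \<bullet> x)\<^sup>2)"
    by (simp add: norm_vec_def L2_set_def sum_nonneg matrix_vector_mul_component)
  also have "\<dots> \<le> (\<Sum>i\<in>UNIV. (norm (A$i))\<^sup>2 * (norm x)\<^sup>2)"
  proof (rule sum_mono)
    fix i
    have "\<bar>A$i \<bullet> x\<bar>\<^sup>2 \<le> (norm (A$i) * norm x)\<^sup>2"
      by (rule power_mono[OF Cauchy_Schwarz_ineq2]) simp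
    then show "(A$i \<bullet> x)\<^sup>2 \<le> (norm (A$i))\<^sup>2 * (norm x)\<^sup>2"
      by (simp add: power_mult_distrib)
  qed
  also have "\<dots> = (norm A * norm x)\<^sup>2"
    by (simp add: norm_vec_def L2_set_def sum_nonneg power_mult_distrib sum_distrib_right)
  finally show ?thesis
    by (rule power2_le_imp_le) simp
qed

lemma norm_transpose: "norm (transpose (A::real^'n^'m)) = norm A"
proof -
  have "(norm (transpose A))\<^sup>2 = (norm A)\<^sup>2"
    by (simp add: norm_vec_def L2_set_def sum_nonneg transpose_def) (rule sum.swap)
  then show ?thesis
    by (simp add: power2_eq_iff_nonneg)
qed

lemma norm_transpose_mult_mult_le:
  "norm (transpose (M::real^'d^'n) *v ((A::real^'m^'n) *v v)) \<le> norm M * (norm A * norm v)"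
proof -
  have "norm (transpose M *v (A *v v)) \<le> norm M * norm (A *v v)"
    using norm_matrix_vector_mult_le[of "transpose M" "A *v v"] unfolding norm_transpose .
  also have "\<dots> \<le> norm M * (norm A * norm v)"
    by (intro mult_left_mono norm_matrix_vector_mult_le) simp
  finally show ?thesis .
qed

lemma norm_misfit_gradient_diff_le:
  fixes A :: "real^'m^'n" and J K :: "real^'d^'n"
  assumes u_v: "norm (u - v) \<le> e1" and J_K: "norm (J - K) \<le> e2"
  shows "norm (transpose J *v (A *v (y - u)) - transpose K *v (A *v (y - v)))
    \<le> norm A * (norm K * e1 + (norm y + norm u) * e2)"
proof -
  have split: "transpose J *v (A *v (y - u)) - transpose K *v (A *v (y - v))
      = transpose (J - K) *v (A *v (y - u)) + transpose K *v (A *v (v - u))"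
  proof -
    have "transpose (J - K) = transpose J - transpose K"
      by (simp add: transpose_def vec_eq_iff)
    then show ?thesis
      by (simp only: matrix_vector_mult_diff_rdistrib matrix_vector_mult_diff_distrib) simp
  qed
  have "norm (transpose (J - K) *v (A *v (y - u))) \<le> norm (J - K) * (norm A * norm (y - u))"
    by (rule norm_transpose_mult_mult_le)
  also have "\<dots> \<le> e2 * (norm A * (norm y + norm u))"
    using J_K order_trans[OF norm_ge_zero J_K]
    by (intro mult_mono mult_left_mono norm_triangle_ineq4) auto
  finally have Jacobian_error: "norm (transpose (J - K) *v (A *v (y - u)))
      \<le> e2 * (norm A * (norm y + norm u))" .
  have "norm (transpose K *v (A *v (v - u))) \<le> norm K * (norm A * norm (v - u))"
    by (rule norm_transpose_mult_mult_le)
  also have "\<dots> \<le> norm K * (norm A * e1)"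
    using u_v by (intro mult_left_mono) (auto simp: norm_minus_commute)
  finally have output_error: "norm (transpose K *v (A *v (v - u))) \<le> norm K * (norm A * e1)" .
  have "norm (transpose J *v (A *v (y - u)) - transpose K *v (A *v (y - v)))
      \<le> e2 * (norm A * (norm y + norm u)) + norm K * (norm A * e1)"
    unfolding split using norm_triangle_ineq Jacobian_error output_error
    by (rule order_trans[OF _ add_mono])
  then show ?thesis
    by (simp add: algebra_simps)
qed

lemma grad_eqI:
  assumes "(f has_derivative (\<lambda>h. g \<bullet> h)) (at x)"
  shows "grad f x = g"
proof -
  have "frechet_derivative f (at x) = (\<lambda>h. g \<bullet> h)"
    using frechet_derivative_at[OF assms] by simp
  then show ?thesis
    by (simp add: grad_def vec_eq_iff cart_eq_inner_axis[symmetric])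
qed

lemma has_derivative_jacobian:
  assumes "f differentiable (at x)"
  shows "(f has_derivative (\<lambda>h. jacobian f x *v h)) (at x)"
proof -
  have f': "(f has_derivative frechet_derivative f (at x)) (at x)"
    using assms frechet_derivative_works by blast
  then have "(*v) (jacobian f x) = frechet_derivative f (at x)"
    unfolding jacobian_def using has_derivative_linear matrix_vector_mul(2) by metis
  with f' show ?thesis by simp
qed

lemma has_derivative_quadratic_form:
  fixes A :: "real^'n^'n"
  assumes "transpose A = A"
  shows "((\<lambda>v. v \<bullet> (A *v v)) has_derivative (\<lambda>h. 2 * ((A *v v) \<bullet> h))) (at v)"
proof -
  have sym: "u \<bullet> (A *v w) = (A *v u) \<bullet> w" for u w
    using dot_lmul_matrix[of u A w] assms by (metis transpose_matrix_vector)
  have "((\<lambda>v. v \<bullet> (A *v v)) has_derivative (\<lambda>h. v \<bullet> (A *v h) + h \<bullet> (A *v v))) (at v)"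
    by (intro has_derivative_inner has_derivative_ident
        bounded_linear.has_derivative[OF matrix_vector_mul_bounded_linear])
  then show ?thesis
  proof (rule has_derivative_eq_rhs[OF _ ext])
    fix h
    show "v \<bullet> (A *v h) + h \<bullet> (A *v v) = 2 * ((A *v v) \<bullet> h)"
      by (simp add: sym[of v h] inner_commute[of h])
  qed
qed

lemma norm_power2_matrix_vector_mult:
  "(norm (B *v x))\<^sup>2 = x \<bullet> ((transpose B ** B) *v (x::real^'n))"
proof -
  have "(B *v x) \<bullet> (B *v x) = x \<bullet> (transpose B *v (B *v x))"
    by (metis dot_lmul_matrix transpose_matrix_vector inner_commute)
  then show ?thesis
    by (simp add: power2_norm_eq_inner matrix_vector_mul_assoc)
qed

definition regularized_misfit ::
    "real^'n^'n \<Rightarrow> real^'n \<Rightarrow> (real^'d \<Rightarrow> real^'n) \<Rightarrow> real^'d^'m \<Rightarrow> real^'d \<Rightarrow> real" where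
  "regularized_misfit A y f B x = 1/2 * wnorm2 A (y - f x) + 1/2 * (norm (B *v x))\<^sup>2"

lemma grad_regularized_misfit:
  fixes A :: "real^'n^'n" and B :: "real^'d^'m" and f :: "real^'d \<Rightarrow> real^'n"
  assumes A_sym: "transpose A = A" and f_diff: "f differentiable (at x)"
  shows "grad (regularized_misfit A y f B) x
       = - (transpose (jacobian f x) *v (A *v (y - f x))) + (transpose B ** B) *v x"
  unfolding regularized_misfit_def
proof (rule grad_eqI)
  define J where "J = jacobian f x"
  have residual: "((\<lambda>x. y - f x) has_derivative (\<lambda>h. - (J *v h))) (at x)"
    unfolding J_def
    using has_derivative_diff[OF has_derivative_const has_derivative_jacobian[OF f_diff]] by simp
  have misfit: "((\<lambda>x. wnorm2 A (y - f x)) has_derivative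
      (\<lambda>h. 2 * ((A *v (y - f x)) \<bullet> - (J *v h)))) (at x)"
    using diff_chain_at[OF residual has_derivative_quadratic_form[OF A_sym]]
    by (simp add: wnorm2_def o_def)
  have "transpose (transpose B ** B) = transpose B ** B"
    by (simp add: matrix_transpose_mul)
  from has_derivative_quadratic_form[OF this]
  have regularizer: "((\<lambda>x. (norm (B *v x))\<^sup>2) has_derivative
      (\<lambda>h. 2 * (((transpose B ** B) *v x) \<bullet> h))) (at x)"
    by (simp add: norm_power2_matrix_vector_mult)
  have "(A *v (y - f x)) \<bullet> (J *v h) = (transpose J *v (A *v (y - f x))) \<bullet> h" for h
    by (metis dot_lmul_matrix transpose_matrix_vector inner_commute)
  then show "((\<lambda>x. 1/2 * wnorm2 A (y - f x) + 1/2 * (norm (B *v x))\<^sup>2) has_derivative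
      (\<lambda>h. (- (transpose J *v (A *v (y - f x))) + (transpose B ** B) *v x) \<bullet> h)) (at x)"
    by (intro has_derivative_eq_rhs[OF has_derivative_add[OF
          has_derivative_mult_right[OF misfit] has_derivative_mult_right[OF regularizer]]])
      (simp add: fun_eq_iff inner_diff_left)
qed

lemma norm_grad_regularized_misfit_diff_le:
  fixes A :: "real^'n^'n" and B :: "real^'d^'m" and C :: "real^'d^'k"
  assumes A_sym: "transpose A = A"
    and f_diff: "f differentiable (at x)" and g_diff: "g differentiable (at x)"
    and "norm (f x - g x) \<le> e1" and "norm (jacobian f x - jacobian g x) \<le> e2"
  shows "norm (grad (regularized_misfit A y g B) x - grad (regularized_misfit A y f C) x)
    \<le> norm A * (norm (jacobian g x) * e1 + (norm y + norm (f x)) * e2)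
      + norm ((transpose C ** C - transpose B ** B) *v x)"
proof -
  have "grad (regularized_misfit A y g B) x - grad (regularized_misfit A y f C) x
      = (transpose (jacobian f x) *v (A *v (y - f x)) - transpose (jacobian g x) *v (A *v (y - g x)))
        - (transpose C ** C - transpose B ** B) *v x"
    by (simp add: grad_regularized_misfit[OF A_sym] f_diff g_diff algebra_simps)
  also have "norm \<dots> \<le> norm A * (norm (jacobian g x) * e1 + (norm y + norm (f x)) * e2)
      + norm ((transpose C ** C - transpose B ** B) *v x)"
    using norm_misfit_gradient_diff_le[OF assms(4,5)]
    by (rule order_trans[OF norm_triangle_ineq4 add_right_mono])
  finally show ?thesis .
qed

lemma linearized_gradient_cross_difference:
  fixes g h :: "real^'d \<Rightarrow> real^'d"
  assumes "g a = 0" and "h b = 0"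
    and "g b = g a + G *v (b - a) + D *v (b - a)"
    and "h a = h b + H *v (a - b) + E *v (a - b)"
  shows "h a - g b = (H + G) *v (a - b) + (E + D) *v (a - b)"
  unfolding assms(3,4) assms(1,2) by (simp add: algebra_simps)

theorem theorem1:
  fixes Gam :: "real^'n^'n" and y :: "real^'n"
    and F Fh :: "real^'d \<Rightarrow> real^'n"
    and Phi :: "real^'r^'d"
    and L Lh :: "real^'d \<Rightarrow> real"
    and es eh :: "real^'d"
    and R ch eps1 eps2 eps3 :: real
    and \<delta> \<delta>h :: "real^'d \<Rightarrow> real^'d^'d"
  assumes Gam_sym: "transpose Gam = Gam"
    and Gam_pd: "\<forall>v. v \<noteq> 0 \<longrightarrow> v \<bullet> (Gam *v v) > 0"
    and F_diff: "\<forall>x. F differentiable (at x)"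
    and Fh_diff: "\<forall>x. Fh differentiable (at x)"
    and r_le_d: "CARD('r) \<le> CARD('d)"
    and Phi_orth: "transpose Phi ** Phi = mat 1"
    and L_def: "\<forall>x. L x = 1/2 * wnorm2 (matrix_inv Gam) (y - F x) + 1/2 * (norm x)\<^sup>2"
    and Lh_def: "\<forall>x. Lh x = 1/2 * wnorm2 (matrix_inv Gam) (y - Fh x)
                              + 1/2 * (norm (transpose Phi *v x))\<^sup>2"
    and stat: "grad L es = 0"
    and stat_h: "grad Lh eh = 0"
    and eh_range: "(Phi ** transpose Phi) *v eh = eh"
    and R_pos: "R > 0"
    and L_twice: "grad L differentiable (at es)"
    and Lh_twice: "grad Lh differentiable (at eh)"
    and \<delta>_lim: "((\<lambda>x. norm (\<delta> x)) \<longlongrightarrow> 0) (at es)"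
    and \<delta>h_lim: "((\<lambda>x. norm (\<delta>h x)) \<longlongrightarrow> 0) (at eh)"
    and L_exp: "\<forall>x. norm (x - es) \<le> R \<longrightarrow>
        grad L x = grad L es + hess L es *v (x - es) + \<delta> x *v (x - es)"
    and Lh_exp: "\<forall>x. norm (x - eh) \<le> R \<longrightarrow>
        grad Lh x = grad Lh eh + hess Lh eh *v (x - eh) + \<delta>h x *v (x - eh)"
    and ch_pos: "ch > 0"
    and A1_lower: "norm ((hess Lh eh + hess L es) *v (es - eh) + (\<delta>h es + \<delta> eh) *v (es - eh))
                     \<ge> ch * norm (es - eh)"
    and eps_pos: "eps1 > 0" "eps2 > 0" "eps3 > 0"
    and A2: "\<forall>x. norm (x - es) \<le> R \<or> norm (x - eh) \<le> R \<longrightarrow>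
        norm (F x - Fh x) \<le> eps1 \<and> norm (jacobian F x - jacobian Fh x) \<le> eps2"
    and A3: "norm ((mat 1 - Phi ** transpose Phi) *v es) \<le> eps3"
    and close: "norm (es - eh) \<le> R"
  shows "norm (es - eh) \<le>
      norm (matrix_inv Gam) * (norm (jacobian Fh es) + norm (jacobian F eh)) / ch * eps1
    + norm (matrix_inv Gam) * (2 * norm y + norm (F es) + norm (Fh eh)) / ch * eps2
    + 1 / ch * eps3"
proof -
  define A where "A = matrix_inv Gam"
  have A_sym: "transpose A = A"
    unfolding A_def using Gam_sym invertible_if_positive_definite[OF Gam_pd]
    by (rule transpose_matrix_inv_symmetric)
  have L_eq: "L = regularized_misfit A y F (mat 1)"
    and Lh_eq: "Lh = regularized_misfit A y Fh (transpose Phi)"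
    using L_def Lh_def by (simp_all add: fun_eq_iff regularized_misfit_def A_def)
  have at_es: "norm (grad Lh es - grad L es)
      \<le> norm A * (norm (jacobian Fh es) * eps1 + (norm y + norm (F es)) * eps2) + eps3"
    using norm_grad_regularized_misfit_diff_le[OF A_sym F_diff[rule_format] Fh_diff[rule_format],
        of es eps1 eps2 y "transpose Phi" "mat 1"] A2 R_pos A3
    by (simp add: L_eq Lh_eq)
  have at_eh: "norm (grad L eh - grad Lh eh)
      \<le> norm A * (norm (jacobian F eh) * eps1 + (norm y + norm (Fh eh)) * eps2)"
    using norm_grad_regularized_misfit_diff_le[OF A_sym Fh_diff[rule_format] F_diff[rule_format],
        of eh eps1 eps2 y "mat 1" "transpose Phi"] A2 R_pos eh_range
    by (simp add: L_eq Lh_eq norm_minus_commute matrix_vector_mult_diff_rdistrib)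
  have "grad Lh es - grad L eh
      = (hess Lh eh + hess L es) *v (es - eh) + (\<delta>h es + \<delta> eh) *v (es - eh)"
    using close
    by (intro linearized_gradient_cross_difference stat stat_h L_exp[rule_format] Lh_exp[rule_format])
      (simp_all add: norm_minus_commute)
  then have "ch * norm (es - eh) \<le> norm (grad Lh es - grad L eh)"
    using A1_lower by simp
  also have "\<dots> = norm ((grad Lh es - grad L es) - (grad L eh - grad Lh eh))"
    using stat stat_h by simp
  also have "\<dots> \<le> norm (grad Lh es - grad L es) + norm (grad L eh - grad Lh eh)"
    by (rule norm_triangle_ineq4)
  also have "\<dots> \<le> norm A * (norm (jacobian Fh es) + norm (jacobian F eh)) * eps1
      + norm A * (2 * norm y + norm (F es) + norm (Fh eh)) * eps2 + eps3"
    using at_es at_eh by (simp add: algebra_simps)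
  finally show ?thesis
    using ch_pos by (simp add: A_def pos_le_divide_eq add_divide_distrib[symmetric] mult.commute)
qed

end
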